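(* For every $n\in\mathbb{N}=\{1,2,\dots\}$, the map $a\mapsto\frac{\Psi_{n+1}(a)}{\Psi_n(a)}$ is strictly increasing on $(0,\infty)$.
   Context: $\Psi_n(x)=\frac{\partial^{n+1}}{\partial x^{n+1}}\log\Gamma(x)$ is the polygamma function of order $n$, where $\Gamma$ is the gamma function. *)

theory Defs
  imports "HOL-Analysis.Analysis"
begin

end

theory Submission
  imports Defs
begin

text \<open>For \<open>n \<ge> 1\<close> and \<open>a > 0\<close> one has \<open>\<Psi>\<^sub>n(a) = (-1)\<^sup>n\<^sup>+\<^sup>1 n! \<zeta>(n+1, a)\<close> with the Hurwitz zeta
  function \<open>\<zeta>(m, a) = \<Sum>\<^sub>k (a + k)\<^sup>-\<^sup>m\<close>. The derivative of \<open>\<Psi>\<^sub>n\<^sub>+\<^sub>1 / \<Psi>\<^sub>n\<close> has the sign of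
  \<open>\<Psi>\<^sub>n\<^sub>+\<^sub>2 \<Psi>\<^sub>n - \<Psi>\<^sub>n\<^sub>+\<^sub>1\<^sup>2 = (n!)\<^sup>2 (n+1) ((n+2) \<zeta>(n+1,a) \<zeta>(n+3,a) - (n+1) \<zeta>(n+2,a)\<^sup>2)\<close>,
  which is positive because Cauchy--Schwarz gives \<open>\<zeta>(n+2,a)\<^sup>2 \<le> \<zeta>(n+1,a) \<zeta>(n+3,a)\<close>.\<close>

definition hurwitz_sum :: "nat \<Rightarrow> real \<Rightarrow> real" where
  "hurwitz_sum m a = (\<Sum>k. inverse ((a + of_nat k) ^ m))"

lemma hurwitz_sum_sums:
  assumes "a > 0" "m \<ge> 2"
  shows "(\<lambda>k. inverse (a + of_nat k) ^ m) sums hurwitz_sum m a"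
proof -
  have "summable (\<lambda>k. inverse ((a + of_nat k) ^ m))"
    using Polygamma_converges'[of a m] assms by simp
  thus ?thesis unfolding hurwitz_sum_def by (simp add: summable_sums power_inverse)
qed

lemma hurwitz_sum_pos:
  assumes "a > 0" "m \<ge> 2"
  shows "hurwitz_sum m a > 0"
  using suminf_pos[OF sums_summable[OF hurwitz_sum_sums[OF assms]]]
    sums_unique[OF hurwitz_sum_sums[OF assms]] assms by simp

lemma Polygamma_eq_hurwitz_sum:
  assumes "a > 0" "n \<ge> 1"
  shows "Polygamma n a = (-1) ^ Suc n * fact n * hurwitz_sum (Suc n) a"
  using assms by (simp add: Polygamma_def hurwitz_sum_def)

lemma sums_Cauchy_Schwarz:
  fixes w x :: "nat \<Rightarrow> real"
  assumes "w sums A" "(\<lambda>k. w k * x k) sums B" "(\<lambda>k. w k * x k ^ 2) sums C"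
    and "\<And>k. w k \<ge> 0" and "A > 0"
  shows "B ^ 2 \<le> A * C"
proof -
  define t where "t = B / A"
  have "(\<lambda>k. w k * x k ^ 2 - (2 * t) * (w k * x k) + t ^ 2 * w k) sums (C - (2 * t) * B + t ^ 2 * A)"
    by (intro sums_add sums_diff sums_mult assms)
  moreover have "(\<lambda>k. w k * x k ^ 2 - (2 * t) * (w k * x k) + t ^ 2 * w k) = (\<lambda>k. w k * (x k - t) ^ 2)"
    by (simp add: power2_eq_square algebra_simps)
  ultimately have "(\<lambda>k. w k * (x k - t) ^ 2) sums (C - (2 * t) * B + t ^ 2 * A)"
    by simp
  from sums_le[OF _ sums_zero this] have "0 \<le> C - (2 * t) * B + t ^ 2 * A"
    by (simp add: assms(4))
  also have "\<dots> = C - B ^ 2 / A"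
    using \<open>A > 0\<close> by (simp add: t_def power2_eq_square field_simps)
  finally show ?thesis
    using \<open>A > 0\<close> by (simp add: field_simps)
qed

lemma hurwitz_sum_log_convex:
  assumes "a > 0" "m \<ge> 2"
  shows "hurwitz_sum (m + 1) a ^ 2 \<le> hurwitz_sum m a * hurwitz_sum (m + 2) a"
proof (rule sums_Cauchy_Schwarz)
  let ?x = "\<lambda>k. inverse (a + of_nat k)"
  show "(\<lambda>k. ?x k ^ m) sums hurwitz_sum m a"
    using hurwitz_sum_sums[OF assms] .
  show "(\<lambda>k. ?x k ^ m * ?x k) sums hurwitz_sum (m + 1) a"
    using hurwitz_sum_sums[of a "m + 1"] assms by (simp add: mult.commute)
  show "(\<lambda>k. ?x k ^ m * ?x k ^ 2) sums hurwitz_sum (m + 2) a"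
    using hurwitz_sum_sums[of a "m + 2"] assms
    by (simp add: power2_eq_square mult.commute mult.left_commute)
  show "0 \<le> ?x k ^ m" for k
    using assms by simp
  show "hurwitz_sum m a > 0"
    using hurwitz_sum_pos[OF assms] .
qed

lemma Polygamma_Turan_pos:
  fixes a :: real
  assumes "a > 0" "n \<ge> 1"
  shows "Polygamma (Suc (Suc n)) a * Polygamma n a - Polygamma (Suc n) a ^ 2 > 0"
proof -
  define A where "A = hurwitz_sum (Suc n) a"
  define B where "B = hurwitz_sum (Suc (Suc n)) a"
  define C where "C = hurwitz_sum (Suc (Suc (Suc n))) a"
  have "A > 0" "C > 0"
    using hurwitz_sum_pos[OF \<open>a > 0\<close>] assms by (simp_all add: A_def C_def)
  have "B ^ 2 \<le> A * C"
    using hurwitz_sum_log_convex[OF \<open>a > 0\<close>, of "Suc n"] assms by (simp add: A_def B_def C_def)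
  have P0: "Polygamma n a = (-1) ^ Suc n * fact n * A"
    using Polygamma_eq_hurwitz_sum[OF assms] by (simp add: A_def)
  have P1: "Polygamma (Suc n) a = (-1) ^ n * (fact n * Suc n) * B"
    using Polygamma_eq_hurwitz_sum[OF \<open>a > 0\<close>, of "Suc n"] by (simp add: B_def algebra_simps)
  have P2: "Polygamma (Suc (Suc n)) a = (-1) ^ Suc n * (fact n * Suc n * Suc (Suc n)) * C"
    using Polygamma_eq_hurwitz_sum[OF \<open>a > 0\<close>, of "Suc (Suc n)"] by (simp add: C_def algebra_simps)
  have "Polygamma (Suc (Suc n)) a * Polygamma n a - Polygamma (Suc n) a ^ 2
      = (fact n) ^ 2 * real (Suc n) * (Suc (Suc n) * (A * C) - Suc n * B ^ 2)"
    unfolding P0 P1 P2 by (simp add: algebra_simps power2_eq_square flip: power_add)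
  moreover have "Suc n * B ^ 2 < Suc (Suc n) * (A * C)"
  proof -
    have "Suc n * B ^ 2 \<le> Suc n * (A * C)"
      using \<open>B ^ 2 \<le> A * C\<close> by (intro mult_left_mono) auto
    also have "\<dots> < Suc (Suc n) * (A * C)"
      using \<open>A > 0\<close> \<open>C > 0\<close> by (intro mult_strict_right_mono) auto
    finally show ?thesis .
  qed
  moreover have "0 < (fact n :: real) ^ 2 * real (Suc n)"
    by (intro mult_pos_pos) simp_all
  ultimately show ?thesis
    by (metis diff_gt_0_iff_gt mult_pos_pos)
qed

theorem lemmaC1:
  fixes n :: nat
  assumes "n \<ge> 1"
  shows "strict_mono_on {0<..} (\<lambda>a::real. Polygamma (Suc n) a / Polygamma n a)"
proof (rule strict_mono_onI)
  fix r s :: real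
  assume "r \<in> {0<..}" "s \<in> {0<..}" "r < s"
  show "Polygamma (Suc n) r / Polygamma n r < Polygamma (Suc n) s / Polygamma n s"
  proof (rule DERIV_pos_imp_increasing[OF \<open>r < s\<close>])
    fix x assume "r \<le> x" "x \<le> s"
    hence "x > 0" using \<open>r \<in> {0<..}\<close> by simp
    hence "x \<notin> \<int>\<^sub>\<le>\<^sub>0" by (auto elim!: nonpos_Ints_cases)
    have "Polygamma n x \<noteq> 0"
      using Polygamma_eq_hurwitz_sum[OF \<open>x > 0\<close> assms] hurwitz_sum_pos[OF \<open>x > 0\<close>, of "Suc n"] assms
      by simp
    hence "((\<lambda>a. Polygamma (Suc n) a / Polygamma n a) has_real_derivative
        (Polygamma (Suc (Suc n)) x * Polygamma n x - Polygamma (Suc n) x * Polygamma (Suc n) x)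
          / (Polygamma n x * Polygamma n x)) (at x)"
      by (intro DERIV_divide has_field_derivative_Polygamma \<open>x \<notin> \<int>\<^sub>\<le>\<^sub>0\<close>)
    moreover have "(Polygamma (Suc (Suc n)) x * Polygamma n x - Polygamma (Suc n) x * Polygamma (Suc n) x)
          / (Polygamma n x * Polygamma n x) > 0"
      using Polygamma_Turan_pos[OF \<open>x > 0\<close> assms] \<open>Polygamma n x \<noteq> 0\<close>
      by (intro divide_pos_pos) (simp_all only: power2_eq_square, metis not_real_square_gt_zero)
    ultimately show "\<exists>y. ((\<lambda>a. Polygamma (Suc n) a / Polygamma n a) has_real_derivative y) (at x) \<and> 0 < y"
      by blast
  qed
qed

end
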